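(* Let $\beta$ be an ordered partition of $N$. For every $x\in X^\beta$ we have $\bar W^{\beta(x)}x\subseteq W^\beta$, and the map $\bigsqcup_{x\in X^\beta}\bar W^{\beta(x)}\to W^\beta$, $w\mapsto wx$ (for $w$ in the copy indexed by $x$), is a bijection.
   Context: Fix $N\ge2$. $\bar P=\bigoplus_{i=1}^N\mathbb Z\epsilon_i$ with $(\epsilon_i,\epsilon_j)=\delta_{ij}$; $\bar R=\{\alpha_{ij}=\epsilon_i-\epsilon_j:i\ne j\}$, $\bar R_+=\{\alpha_{ij}:i<j\}$, $\alpha_i=\alpha_{i,i+1}$, $\bar\Pi=\{\alpha_1,\dots,\alpha_{N-1}\}$; $\bar P_-=\{\eta\in\bar P:(\eta,\alpha)\le0\ \forall\alpha\in\bar R_+\}$. $\bar W=\mathfrak S_N$ acts by permuting indices; $W=\bar W\ltimes\bar P$ with elements $wt_\eta$, $wt_\eta w^{-1}=t_{w(\eta)}$. Affine roots (with formal $\delta$): $R=\{\bar\alpha+k\delta:\bar\alpha\in\bar R,k\in\mathbb Z\}$, $R_+=\{\bar\alpha+k\delta:\bar\alpha\in\bar R_+,k\ge0\}\cup\{-\bar\alpha+k\delta:\bar\alpha\in\bar R_+,k>0\}$, $R_-=R\setminus R_+$; $W$ acts on $R$ by $w(\bar\alpha+k\delta)=w(\bar\alpha)+k\delta$, $t_\eta(\bar\alpha+k\delta)=\bar\alpha+(k-(\eta,\bar\alpha))\delta$; $l(w)=\#(R_+\cap w^{-1}(R_-))$. An ordered partition $\gamma$ of $N$ gives blocks of consecutive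 indices of sizes $\gamma_1,\dots,\gamma_r$; $\bar R_\gamma=\{\alpha_{ij}:i,j\text{ in the same block}\}$, $\bar R_{\gamma,+}=\bar R_\gamma\cap\bar R_+$, $\bar\Pi_\gamma=\bar\Pi\cap\bar R_\gamma$, $\bar W_\gamma$ generated by $s_\alpha$, $\alpha\in\bar\Pi_\gamma$; $W^\gamma=\{w\in W:l(wu)\ge l(w)\ \forall u\in\bar W_\gamma\}$, $\bar W^\gamma=W^\gamma\cap\bar W$. For $w\in W$, $\beta(w)$ denotes the ordered partition of $N$ with $\bar\Pi_{\beta(w)}=\bar\Pi\cap w(\bar R_{\beta,+})$. For $w\in\bar W^\beta$, $\eta_w\in\bar P_-$ is defined by $(\eta_w,\epsilon_1)=0$ and $(\eta_w,\alpha_i)=-1$ if $\alpha_i\in w(\bar R_+\setminus\bar R_{\beta,+})$, $0$ otherwise; $\bar P_-(w)=\{\eta+\eta_w:\eta\in\bar P_-\}$; $X^\beta=\{t_\eta w:w\in\bar W^\beta,\eta\in\bar P_-(w)\}$. *)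

theory Defs
  imports "HOL-Combinatorics.Permutations"
begin

(* Indices are 1..N.  A weight eta in Pbar = Z^N is a function nat => int vanishing outside {1..N};
   a permutation w in Wbar = S_N is a function nat => nat with  w permutes {1..N}.
   An element of the extended affine Weyl group W = Wbar |x Pbar is represented by the pair
   (eta, w), standing for  t_eta w.
   An affine root eps_i - eps_j + k delta is represented by the triple (i, j, k). *)

type_synonym weight = "nat \<Rightarrow> int"
type_synonym perm = "nat \<Rightarrow> nat"
type_synonym welt = "weight \<times> perm"
type_synonym aroot = "nat \<times> nat \<times> int"

definition Pbar :: "nat \<Rightarrow> weight set" where
  "Pbar N = {eta. \<forall>i. i \<notin> {1..N} \<longrightarrow> eta i = 0}"

definition Wbar :: "nat \<Rightarrow> perm set" where
  "Wbar N = {w. w permutes {1..N}}"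

definition Wgrp :: "nat \<Rightarrow> welt set" where
  "Wgrp N = {(eta, w). eta \<in> Pbar N \<and> w \<in> Wbar N}"

definition emb :: "perm \<Rightarrow> welt" where
  "emb w = ((\<lambda>_. 0), w)"

(* action of a permutation on weights: w(sum mu_i eps_i) = sum mu_i eps_{w i} *)
definition wact :: "perm \<Rightarrow> weight \<Rightarrow> weight" where
  "wact w mu = (\<lambda>j. mu (inv w j))"

(* product  (t_eta w)(t_mu v) = t_{eta + w(mu)} (w v) *)
definition wmult :: "welt \<Rightarrow> welt \<Rightarrow> welt" where
  "wmult x y = (case x of (eta, w) \<Rightarrow> case y of (mu, v) \<Rightarrow>
      ((\<lambda>j. eta j + wact w mu j), w \<circ> v))"

definition Rroots :: "nat \<Rightarrow> aroot set" where
  "Rroots N = {(i, j, k). i \<in> {1..N} \<and> j \<in> {1..N} \<and> i \<noteq> j}"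

definition Rplus :: "nat \<Rightarrow> aroot set" where
  "Rplus N = {(i, j, k) \<in> Rroots N. (i < j \<and> k \<ge> 0) \<or> (j < i \<and> k > 0)}"

definition Rminus :: "nat \<Rightarrow> aroot set" where
  "Rminus N = Rroots N - Rplus N"

(* (t_eta w)(alpha_ij + k delta) = alpha_{w i, w j} + (k - (eta, alpha_{w i, w j})) delta *)
definition ract :: "welt \<Rightarrow> aroot \<Rightarrow> aroot" where
  "ract x a = (case x of (eta, w) \<Rightarrow> case a of (i, j, k) \<Rightarrow>
      (w i, w j, k - (eta (w i) - eta (w j))))"

definition len :: "nat \<Rightarrow> welt \<Rightarrow> nat" where
  "len N x = card {a \<in> Rplus N. ract x a \<in> Rminus N}"

definition Rbar :: "nat \<Rightarrow> aroot set" where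
  "Rbar N = {(i, j, k) \<in> Rroots N. k = 0}"

definition Rbarplus :: "nat \<Rightarrow> aroot set" where
  "Rbarplus N = {(i, j, k) \<in> Rbar N. i < j}"

definition Pibar :: "nat \<Rightarrow> aroot set" where
  "Pibar N = {(i, Suc i, 0) | i. 1 \<le> i \<and> i < N}"

definition ordpart :: "nat \<Rightarrow> nat list \<Rightarrow> bool" where
  "ordpart N g \<longleftrightarrow> (\<forall>p \<in> set g. 0 < p) \<and> sum_list g = N"

definition sameblock :: "nat list \<Rightarrow> nat \<Rightarrow> nat \<Rightarrow> bool" where
  "sameblock g i j \<longleftrightarrow> (\<exists>m < length g.
      sum_list (take m g) < i \<and> i \<le> sum_list (take (Suc m) g) \<and>
      sum_list (take m g) < j \<and> j \<le> sum_list (take (Suc m) g))"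

definition Rbar_g :: "nat \<Rightarrow> nat list \<Rightarrow> aroot set" where
  "Rbar_g N g = {(i, j, k) \<in> Rbar N. sameblock g i j}"

definition Rbar_gplus :: "nat \<Rightarrow> nat list \<Rightarrow> aroot set" where
  "Rbar_gplus N g = Rbar_g N g \<inter> Rbarplus N"

definition Pibar_g :: "nat \<Rightarrow> nat list \<Rightarrow> aroot set" where
  "Pibar_g N g = Pibar N \<inter> Rbar_g N g"

(* Wbar_gamma: generated by the reflections s_alpha, alpha in Pibar_gamma
   (s_{alpha_i} = transposition of i and i+1; since these are involutions of a finite group,
    the generated submonoid is the generated subgroup) *)
inductive_set Wbar_g :: "nat \<Rightarrow> nat list \<Rightarrow> perm set" for N g where
  gen_id: "id \<in> Wbar_g N g"
| gen_step: "\<lbrakk>(i, Suc i, 0) \<in> Pibar_g N g; u \<in> Wbar_g N g\<rbrakk>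
      \<Longrightarrow> Transposition.transpose i (Suc i) \<circ> u \<in> Wbar_g N g"

definition Wsup :: "nat \<Rightarrow> nat list \<Rightarrow> welt set" where
  "Wsup N g = {x \<in> Wgrp N. \<forall>u \<in> Wbar_g N g. len N (wmult x (emb u)) \<ge> len N x}"

definition Wbarsup :: "nat \<Rightarrow> nat list \<Rightarrow> welt set" where
  "Wbarsup N g = Wsup N g \<inter> emb ` Wbar N"

definition betaof :: "nat \<Rightarrow> nat list \<Rightarrow> welt \<Rightarrow> nat list" where
  "betaof N b x = (THE g. ordpart N g \<and> Pibar_g N g = Pibar N \<inter> ract x ` Rbar_gplus N b)"

(* eta_w for w in Wbar^beta: (eta_w, eps_1) = 0, (eta_w, alpha_i) = -1 if alpha_i in
   w(Rbar_+ - Rbar_{beta,+}), 0 otherwise; so eta_w(i) = #{m < i : alpha_m in w(...)} *)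
definition eta_w :: "nat \<Rightarrow> nat list \<Rightarrow> perm \<Rightarrow> weight" where
  "eta_w N b w = (\<lambda>i. if i \<in> {1..N} then
      int (card {m \<in> {1..<i}. (m, Suc m, 0) \<in> ract (emb w) ` (Rbarplus N - Rbar_gplus N b)})
      else 0)"

definition Pminus :: "nat \<Rightarrow> weight set" where
  "Pminus N = {eta \<in> Pbar N. \<forall>(i, j, k) \<in> Rbarplus N. eta i - eta j \<le> 0}"

definition Pminus_w :: "nat \<Rightarrow> nat list \<Rightarrow> perm \<Rightarrow> weight set" where
  "Pminus_w N b w = {(\<lambda>i. eta i + eta_w N b w i) | eta. eta \<in> Pminus N}"

definition Xset :: "nat \<Rightarrow> nat list \<Rightarrow> welt set" where
  "Xset N b = {(eta, w) | eta w. emb w \<in> Wbarsup N b \<and> eta \<in> Pminus_w N b w}"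

end

(* Write x = t_eta w and give every position p in {1..N} the weight lambda p = eta (w p); left
   multiplication by an element of Wbar does not change lambda.  Since l(x s_alpha) < l(x) whenever
   x(alpha) < 0, while elements of Wbar_gamma only permute the positive roots outside R_gamma,
   x lies in W^gamma iff x(alpha_p) > 0 for the simple roots of gamma, i.e. iff
   p |-> (eta (w p), w p) increases lexicographically along every gamma-block.
   Unwinding eta_w, t_e v lies in X^beta iff v is increasing on beta-blocks and v lists the
   positions in increasing order of the key (lambda p, -block p, p), where lambda = e o v.
   So for y = t_mu w in W^beta the factor x = t_e v is forced: v is the ranking of the positions
   by this key and e = lambda o v^-1; this gives injectivity.  Conversely u = w v^-1 is increasing
   on the blocks of beta(x): positions that are consecutive for v and lie in one block of beta(x)
   have the same weight and come from one beta-block, on which y is increasing. *)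

theory Submission
  imports Defs "HOL-Library.Product_Lexorder"
begin

section \<open>Blocks of an ordered partition\<close>

definition psum :: "nat list \<Rightarrow> nat \<Rightarrow> nat" where
  "psum g k = sum_list (take k g)"

definition cuts :: "nat list \<Rightarrow> nat set" where
  "cuts g = psum g ` {..length g}"

definition block :: "nat list \<Rightarrow> nat \<Rightarrow> nat" where
  "block g p = card {k. k \<le> length g \<and> psum g k < p}"

lemma psum_0 [simp]: "psum g 0 = 0"
  by (simp add: psum_def)

lemma psum_Suc: "k < length g \<Longrightarrow> psum g (Suc k) = psum g k + g ! k"
  by (simp add: psum_def take_Suc_conv_app_nth)

lemma psum_mono: "k \<le> l \<Longrightarrow> psum g k \<le> psum g l"
proof -
  assume "k \<le> l"
  then obtain d where "l = k + d"
    using le_Suc_ex by blast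
  then show ?thesis
    by (simp add: psum_def take_add)
qed

lemma psum_length: "ordpart N g \<Longrightarrow> psum g (length g) = N"
  by (simp add: psum_def ordpart_def)

lemma psum_le: "ordpart N g \<Longrightarrow> psum g k \<le> N"
  using psum_mono[of k "length g" g] psum_length[of N g]
  by (cases "k \<le> length g") (auto simp: psum_def)

lemma psum_strict_mono:
  assumes "ordpart N g" "k < l" "l \<le> length g"
  shows "psum g k < psum g l"
proof -
  have "0 < g ! k"
    using assms by (auto simp: ordpart_def)
  then have "psum g k < psum g (Suc k)"
    using assms by (simp add: psum_Suc)
  also have "\<dots> \<le> psum g l"
    using assms by (simp add: psum_mono)
  finally show ?thesis .
qed

lemma block_mono: "p \<le> q \<Longrightarrow> block g p \<le> block g q"
  unfolding block_def by (rule card_mono) auto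

lemma block_eq:
  assumes "m < length g" "psum g m < p" "p \<le> psum g (Suc m)"
  shows "block g p = Suc m"
proof -
  have "psum g k < p" if "k \<le> m" for k
    using psum_mono[OF that, of g] assms(2) by linarith
  moreover have "\<not> psum g k < p" if "\<not> k \<le> m" for k
    using psum_mono[of "Suc m" k g] that assms(3) by linarith
  ultimately have "{k. k \<le> length g \<and> psum g k < p} = {..m}"
    using assms(1) by force
  then show ?thesis
    by (simp add: block_def)
qed

lemma ex_block:
  assumes "ordpart N g" "p \<in> {1..N}"
  obtains m where "m < length g" "psum g m < p" "p \<le> psum g (Suc m)"
proof -
  define k where "k = (LEAST k. p \<le> psum g k)"
  have "p \<le> psum g (length g)"
    using assms psum_length by auto
  then have k: "p \<le> psum g k" "k \<le> length g"
    unfolding k_def by (auto intro: LeastI Least_le)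
  moreover have "k \<noteq> 0"
    using k(1) assms(2) by (cases k) auto
  then obtain m where "k = Suc m"
    using not0_implies_Suc by blast
  moreover have "\<not> p \<le> psum g m"
    using \<open>k = Suc m\<close> not_less_Least[of m "\<lambda>k. p \<le> psum g k"] by (simp add: k_def)
  ultimately show thesis
    by (intro that[of m]) auto
qed

lemma sameblock_iff_block:
  assumes "ordpart N g"
  shows "sameblock g p q \<longleftrightarrow> p \<in> {1..N} \<and> q \<in> {1..N} \<and> block g p = block g q"
proof
  assume "sameblock g p q"
  then obtain m where "m < length g" "psum g m < p" "p \<le> psum g (Suc m)"
    "psum g m < q" "q \<le> psum g (Suc m)"
    unfolding sameblock_def psum_def by blast
  then show "p \<in> {1..N} \<and> q \<in> {1..N} \<and> block g p = block g q"
    using block_eq[of m g] psum_le[OF assms, of "Suc m"] by auto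
next
  assume pq: "p \<in> {1..N} \<and> q \<in> {1..N} \<and> block g p = block g q"
  obtain m where m: "m < length g" "psum g m < p" "p \<le> psum g (Suc m)"
    using ex_block[OF assms] pq by blast
  obtain m' where m': "m' < length g" "psum g m' < q" "q \<le> psum g (Suc m')"
    using ex_block[OF assms] pq by blast
  have "m = m'"
    using block_eq[OF m] block_eq[OF m'] pq by simp
  then show "sameblock g p q"
    using m m' unfolding sameblock_def psum_def[symmetric] by auto
qed

lemma block_Suc_eq_iff: "block g (Suc m) = block g m \<longleftrightarrow> m \<notin> cuts g"
proof -
  let ?B = "{k. k \<le> length g \<and> psum g k = m}"
  have "{k. k \<le> length g \<and> psum g k < Suc m} = {k. k \<le> length g \<and> psum g k < m} \<union> ?B"
    by auto
  then have "block g (Suc m) = block g m + card ?B"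
    unfolding block_def by (subst card_Un_disjoint[symmetric]) auto
  moreover have "?B = {} \<longleftrightarrow> m \<notin> cuts g"
    by (auto simp: cuts_def)
  ultimately show ?thesis
    by simp
qed

lemma sameblock_Suc_iff:
  assumes "ordpart N g" "1 \<le> m" "m < N"
  shows "sameblock g m (Suc m) \<longleftrightarrow> m \<notin> cuts g"
  using assms block_Suc_eq_iff[of g m] by (auto simp: sameblock_iff_block[OF assms(1)])

lemma cuts_eq:
  assumes "ordpart N g"
  shows "cuts g = {0, N} \<union> {m. 1 \<le> m \<and> m < N \<and> \<not> sameblock g m (Suc m)}"
proof -
  have "0 \<in> cuts g" "N \<in> cuts g"
    using psum_length[OF assms] by (force simp: cuts_def)+
  moreover have "c < N" if "c \<in> cuts g" "c \<noteq> N" for c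
    using that psum_le[OF assms] by (auto simp: cuts_def le_less)
  ultimately show ?thesis
    using sameblock_Suc_iff[OF assms] by (auto simp: Suc_le_eq)
qed

lemma ordpart_eqI:
  assumes g: "ordpart N g" and h: "ordpart N h" and "cuts g = cuts h"
  shows "g = h"
proof -
  define L where "L g = map (psum g) [0..<Suc (length g)]" for g
  have L: "sorted_wrt (<) (L g) \<and> set (L g) = cuts g" if "ordpart N g" for g
    using psum_strict_mono[OF that]
    by (auto simp: L_def cuts_def sorted_wrt_iff_nth_less simp del: upt_Suc)
  have "L g = L h"
    using L[OF g] L[OF h] \<open>cuts g = cuts h\<close>
    by (intro sorted_distinct_set_unique) (auto simp: strict_sorted_iff)
  then have "length (L g) = length (L h)"
    by (rule arg_cong)
  then have len: "length g = length h"
    by (simp add: L_def del: upt_Suc)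
  have "psum g k = psum h k" if "k \<le> length g" for k
    using arg_cong[OF \<open>L g = L h\<close>, of "\<lambda>xs. xs ! k"] that len
    by (simp add: L_def less_Suc_eq_le del: upt_Suc)
  then show ?thesis
    using len psum_Suc[of _ g] psum_Suc[of _ h] by (intro nth_equalityI) (auto dest: Suc_leI)
qed

lemma cuts_snoc: "cuts (g @ [x]) = cuts g \<union> {sum_list g + x}"
proof -
  have "{..length (g @ [x])} = insert (Suc (length g)) {..length g}"
    by auto
  moreover have "psum (g @ [x]) ` {..length g} = cuts g"
    unfolding cuts_def by (rule image_cong) (simp_all add: psum_def)
  moreover have "psum (g @ [x]) (Suc (length g)) = sum_list g + x"
    by (simp add: psum_def)
  ultimately show ?thesis
    by (simp add: cuts_def)
qed

lemma ex_ordpart_cuts: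
  "finite C \<Longrightarrow> C \<subseteq> {0..N} \<Longrightarrow> 0 \<in> C \<Longrightarrow> N \<in> C \<Longrightarrow> \<exists>g. ordpart N g \<and> cuts g = C"
proof (induction N arbitrary: C rule: less_induct)
  case (less N)
  show ?case
  proof (cases "N = 0")
    case True
    then have "C = {0}"
      using less.prems by auto
    then show ?thesis
      using True by (intro exI[of _ "[]"]) (auto simp: ordpart_def cuts_def)
  next
    case False
    define c where "c = Max (C - {N})"
    have "0 \<in> C - {N}" and fin: "finite (C - {N})"
      using less.prems False by auto
    then have c: "c \<in> C - {N}"
      unfolding c_def using Max_in[OF fin] by auto
    have "C - {N} \<subseteq> {0..c}"
      unfolding c_def using Max_ge[OF fin] by fastforce
    moreover have "c < N"
      using c less.prems(2) by fastforce
    ultimately obtain g where g: "ordpart c g" "cuts g = C - {N}"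
      using less.IH[of c "C - {N}"] less.prems(1) c \<open>0 \<in> C - {N}\<close> by blast
    then have "ordpart N (g @ [N - c])" "cuts (g @ [N - c]) = C"
      using \<open>c < N\<close> less.prems(4) by (auto simp: ordpart_def cuts_snoc)
    then show ?thesis
      by blast
  qed
qed

lemma mem_Pibar_g_iff:
  "(m, Suc m, 0) \<in> Pibar_g N g \<longleftrightarrow> 1 \<le> m \<and> m < N \<and> sameblock g m (Suc m)"
  by (auto simp: Pibar_g_def Pibar_def Rbar_g_def Rbar_def Rroots_def)

lemma Pibar_g_subset: "Pibar_g N g \<subseteq> Pibar N"
  by (simp add: Pibar_g_def)

lemma Pibar_eqI:
  assumes "A \<subseteq> Pibar N" "B \<subseteq> Pibar N" "\<And>m. (m, Suc m, 0) \<in> A \<longleftrightarrow> (m, Suc m, 0) \<in> B"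
  shows "A = B"
proof (intro set_eqI)
  show "a \<in> A \<longleftrightarrow> a \<in> B" for a
    using assms unfolding Pibar_def by blast
qed

lemma ex1_ordpart_Pibar_g:
  assumes "S \<subseteq> Pibar N"
  shows "\<exists>!g. ordpart N g \<and> Pibar_g N g = S"
proof -
  define C where "C = {0, N} \<union> {m. 1 \<le> m \<and> m < N \<and> (m, Suc m, 0) \<notin> S}"
  have "finite C" "C \<subseteq> {0..N}"
    by (auto simp: C_def intro: finite_subset[of _ "{0..N}"])
  then obtain g where g: "ordpart N g" "cuts g = C"
    using ex_ordpart_cuts[of C N] by (auto simp: C_def)
  have "(m, Suc m, 0) \<in> Pibar_g N g \<longleftrightarrow> (m, Suc m, 0) \<in> S" for m
  proof (cases "1 \<le> m \<and> m < N")
    case True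
    then show ?thesis
      using sameblock_Suc_iff[OF g(1)] g(2) by (auto simp: mem_Pibar_g_iff C_def)
  next
    case False
    then show ?thesis
      using assms by (auto simp: mem_Pibar_g_iff Pibar_def)
  qed
  then have "Pibar_g N g = S"
    by (rule Pibar_eqI[OF Pibar_g_subset assms])
  moreover have "h = g" if h: "ordpart N h" "Pibar_g N h = S" for h
  proof (rule ordpart_eqI[OF h(1) g(1)])
    have "sameblock h m (Suc m) \<longleftrightarrow> sameblock g m (Suc m)" if "1 \<le> m" "m < N" for m
      using mem_Pibar_g_iff[of m N h] mem_Pibar_g_iff[of m N g] that h(2) \<open>Pibar_g N g = S\<close>
      by simp
    then show "cuts h = cuts g"
      unfolding cuts_eq[OF h(1)] cuts_eq[OF g(1)] by auto
  qed
  ultimately show ?thesis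
    using g(1) by blast
qed

lemma ordpart_betaof: "ordpart N (betaof N b x)"
  and Pibar_g_betaof: "Pibar_g N (betaof N b x) = Pibar N \<inter> ract x ` Rbar_gplus N b"
  using theI'[OF ex1_ordpart_Pibar_g[of "Pibar N \<inter> ract x ` Rbar_gplus N b" N]]
  by (simp_all add: betaof_def)

lemma sameblock_betaof_iff:
  assumes "1 \<le> m" "m < N"
  shows "sameblock (betaof N b x) m (Suc m) \<longleftrightarrow> (m, Suc m, 0) \<in> ract x ` Rbar_gplus N b"
  using Pibar_g_betaof[of N b x] mem_Pibar_g_iff[of m N "betaof N b x"] assms
  by (auto simp: Pibar_def)

lemma sameblock_Suc_if_between:
  assumes "ordpart N g" "sameblock g p q" "p \<le> m" "m < q"
  shows "sameblock g m (Suc m)"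
proof -
  have "block g p \<le> block g m" "block g m \<le> block g (Suc m)" "block g (Suc m) \<le> block g q"
    using assms(3,4) by (simp_all add: block_mono)
  then show ?thesis
    using assms(2,3,4) by (auto simp: sameblock_iff_block[OF assms(1)])
qed

lemma sameblock_if_Suc:
  assumes "ordpart N g" "1 \<le> a" "a \<le> c" "c \<le> N"
    and "\<And>m. a \<le> m \<Longrightarrow> m < c \<Longrightarrow> sameblock g m (Suc m)"
  shows "sameblock g a c"
proof -
  have "block g (Suc m) \<le> block g m" if "m \<in> {a..<c}" for m
    using assms(5)[of m] that by (simp add: sameblock_iff_block[OF assms(1)])
  then have "block g c \<le> block g a"
    by (rule lift_Suc_antimono_le_ivl[of "{a..<c}", OF _ assms(3)]) simp_all
  then show ?thesis
    using assms(2-4) block_mono[OF assms(3), of g] by (simp add: sameblock_iff_block[OF assms(1)])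
qed

definition block_increasing :: "nat \<Rightarrow> nat list \<Rightarrow> (nat \<Rightarrow> 'a::order) \<Rightarrow> bool" where
  "block_increasing N g f \<longleftrightarrow>
    (\<forall>p. 1 \<le> p \<longrightarrow> p < N \<longrightarrow> sameblock g p (Suc p) \<longrightarrow> f p < f (Suc p))"

lemma block_increasingD:
  assumes "ordpart N g" "block_increasing N g f" "p < q" "sameblock g p q"
  shows "f p < f q"
proof (rule lift_Suc_mono_less_ivl[of "{p..<q}"])
  show "f m < f (Suc m)" if "m \<in> {p..<q}" for m
  proof -
    have "sameblock g m (Suc m)"
      using sameblock_Suc_if_between[OF assms(1,4)] that by simp
    moreover have "1 \<le> m" "m < N"
      using calculation by (simp_all add: sameblock_iff_block[OF assms(1)])
    ultimately show ?thesis
      using assms(2) by (simp add: block_increasing_def)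
  qed
qed (use assms(3) in auto)

lemma block_increasing_less_iff:
  assumes "ordpart N g" "block_increasing N g f" "sameblock g p q"
  shows "f p < f q \<longleftrightarrow> p < q"
proof -
  have "sameblock g q p"
    using assms(3) by (auto simp: sameblock_iff_block[OF assms(1)])
  then show ?thesis
    using block_increasingD[OF assms(1,2)] assms(3) by (metis less_asym' less_irrefl linorder_neqE)
qed

section \<open>Inversions and minimal coset representatives\<close>

definition rneg :: "aroot \<Rightarrow> aroot" where
  "rneg a = (case a of (i, j, k) \<Rightarrow> (j, i, - k))"

definition inversions :: "nat \<Rightarrow> welt \<Rightarrow> aroot set" where
  "inversions N x = {a \<in> Rplus N. ract x a \<in> Rminus N}"

(* Pairs are ordered lexicographically (Product_Lexorder). *)
definition key :: "welt \<Rightarrow> nat \<Rightarrow> int \<times> nat" where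
  "key x p = (case x of (\<eta>, w) \<Rightarrow> (\<eta> (w p), w p))"

lemma ract_emb [simp]: "ract (emb s) (i, j, k) = (s i, s j, k)"
  by (simp add: ract_def emb_def)

lemma inj_ract_emb:
  assumes "inj s"
  shows "inj (ract (emb s))"
proof (rule injI)
  show "a = b" if "ract (emb s) a = ract (emb s) b" for a b
    using that assms by (cases a; cases b) (simp add: inj_eq)
qed

lemma ract_wmult_emb: "ract (wmult x (emb s)) a = ract x (ract (emb s) a)"
  by (cases x; cases a) (simp add: ract_def wmult_def wact_def emb_def)

lemma ract_rneg: "ract x (rneg a) = rneg (ract x a)"
  by (cases x; cases a) (simp add: ract_def rneg_def)

lemma Rminus_iff_rneg_Rplus: "a \<in> Rminus N \<longleftrightarrow> rneg a \<in> Rplus N"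
  by (cases a) (auto simp: Rminus_def Rplus_def Rroots_def rneg_def)

lemma Rplus_Rminus_disjoint: "a \<in> Rplus N \<Longrightarrow> a \<notin> Rminus N"
  by (simp add: Rminus_def)

lemma len_eq_card_inversions: "len N x = card (inversions N x)"
  by (simp add: len_def inversions_def)

lemma finite_inversions: "finite (inversions N x)"
proof -
  obtain \<eta> w where x: "x = (\<eta>, w)"
    by fastforce
  have "inversions N x \<subseteq> (SIGMA i:{1..N}. SIGMA j:{1..N}. {0..\<eta> (w i) - \<eta> (w j)})"
    by (auto simp: inversions_def x Rplus_def Rminus_def Rroots_def ract_def)
  moreover have "finite (SIGMA i:{1..N}. SIGMA j:{1..N}. {0..\<eta> (w i) - \<eta> (w j)})"
    by (intro finite_SigmaI) auto
  ultimately show ?thesis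
    by (rule finite_subset)
qed

lemma ract_root_in_Rminus_iff:
  assumes "w permutes {1..N}" "p \<in> {1..N}" "q \<in> {1..N}" "p \<noteq> q"
  shows "ract (\<eta>, w) (p, q, 0) \<in> Rminus N \<longleftrightarrow> key (\<eta>, w) q < key (\<eta>, w) p"
proof -
  have "w p \<in> {1..N}" "w q \<in> {1..N}"
    using permutes_in_image[OF assms(1)] assms(2,3) by blast+
  moreover have "w p \<noteq> w q"
    using assms(4) permutes_inj[OF assms(1)] by (simp add: inj_eq)
  ultimately show ?thesis
    by (auto simp: ract_def key_def Rminus_def Rplus_def Rroots_def)
qed

lemma transpose_Rplus:
  assumes "1 \<le> p" "p < N" "a \<in> Rplus N" "a \<noteq> (p, Suc p, 0)"
  shows "ract (emb (Transposition.transpose p (Suc p))) a \<in> Rplus N - {(p, Suc p, 0)}"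
proof -
  obtain i j k where a: "a = (i, j, k)"
    using prod_cases3 by blast
  let ?s = "Transposition.transpose p (Suc p)"
  have "?s i \<in> {1..N}" "?s j \<in> {1..N}" "?s i \<noteq> ?s j" "(?s i, ?s j) \<noteq> (p, Suc p) \<or> i > j"
    using assms by (auto simp: a Rplus_def Rroots_def transpose_def)
  moreover have "?s i < ?s j" if "i < j" "k = 0"
    using assms that by (auto simp: a transpose_def)
  ultimately show ?thesis
    using assms by (auto simp: a Rplus_def Rroots_def)
qed

lemma len_wmult_transpose_less:
  assumes "1 \<le> p" "p < N" "ract x (p, Suc p, 0) \<in> Rminus N"
  shows "len N (wmult x (emb (Transposition.transpose p (Suc p)))) < len N x"
proof -
  let ?s = "Transposition.transpose p (Suc p)" and ?\<alpha> = "(p, Suc p, 0 :: int)"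
  have "ract x (ract (emb ?s) ?\<alpha>) = rneg (ract x ?\<alpha>)"
    using ract_rneg[of x ?\<alpha>] by (simp add: rneg_def)
  then have "ract x (ract (emb ?s) ?\<alpha>) \<in> Rplus N"
    using assms(3) by (simp add: Rminus_iff_rneg_Rplus)
  then have "?\<alpha> \<notin> inversions N (wmult x (emb ?s))"
    by (simp add: inversions_def ract_wmult_emb Rplus_Rminus_disjoint)
  then have "ract (emb ?s) ` inversions N (wmult x (emb ?s)) \<subseteq> inversions N x - {?\<alpha>}"
    using transpose_Rplus[OF assms(1,2)] by (fastforce simp: inversions_def ract_wmult_emb)
  moreover have "inj (ract (emb ?s))"
    by (simp add: inj_ract_emb inj_transpose)
  ultimately have "len N (wmult x (emb ?s)) \<le> card (inversions N x - {?\<alpha>})"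
    unfolding len_eq_card_inversions
    by (intro card_inj_on_le[OF inj_on_subset[OF _ subset_UNIV]]) (simp_all add: finite_inversions)
  also have "\<dots> < card (inversions N x)"
    using assms by (intro card_Diff1_less finite_inversions) (simp add: inversions_def Rplus_def Rroots_def)
  finally show ?thesis
    by (simp add: len_eq_card_inversions)
qed

lemma ract_emb_Rplus_if_block_preserving:
  assumes "ordpart N g" "s permutes {1..N}" "\<And>p. block g (s p) = block g p"
    and "a \<in> Rplus N - Rbar_gplus N g"
  shows "ract (emb s) a \<in> Rplus N"
proof -
  obtain i j k where a: "a = (i, j, k)"
    using prod_cases3 by blast
  have ij: "i \<in> {1..N}" "j \<in> {1..N}" "i \<noteq> j"
    using assms(4) by (auto simp: a Rplus_def Rroots_def)
  have "s i \<in> {1..N}" "s j \<in> {1..N}"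
    using permutes_in_image[OF assms(2)] ij(1,2) by blast+
  moreover have "s i \<noteq> s j"
    using permutes_inj[OF assms(2)] ij(3) by (simp add: inj_eq)
  moreover have "s i < s j" if "k = 0"
  proof -
    have "i < j" "\<not> sameblock g i j"
      using assms(4) that
      by (auto simp: a Rplus_def Rroots_def Rbar_gplus_def Rbar_g_def Rbar_def Rbarplus_def)
    then have "block g i < block g j"
      using block_mono[of i j g] ij by (auto simp: sameblock_iff_block[OF assms(1)])
    then have "block g (s i) < block g (s j)"
      by (simp add: assms(3))
    then show ?thesis
      using block_mono[of "s j" "s i" g] by linarith
  qed
  ultimately show ?thesis
    using assms(4) by (auto simp: a Rplus_def Rroots_def)
qed

lemma len_le_len_wmult_block_preserving:
  assumes "ordpart N g" "u permutes {1..N}" "\<And>p. block g (u p) = block g p"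
    and "inversions N x \<inter> Rbar_gplus N g = {}"
  shows "len N x \<le> len N (wmult x (emb u))"
proof -
  have inv_u: "inv u permutes {1..N}"
    using assms(2) by (rule permutes_inv)
  have "ract (emb (inv u)) a \<in> inversions N (wmult x (emb u))" if a: "a \<in> inversions N x" for a
  proof -
    have "block g (inv u p) = block g p" for p
      using assms(3)[of "inv u p"] permutes_inverses(1)[OF assms(2)] by simp
    moreover have "a \<in> Rplus N - Rbar_gplus N g"
      using a assms(4) by (auto simp: inversions_def)
    ultimately have "ract (emb (inv u)) a \<in> Rplus N"
      by (intro ract_emb_Rplus_if_block_preserving[OF assms(1) inv_u])
    moreover have "ract (emb u) (ract (emb (inv u)) a) = a"
      using permutes_inverses(1)[OF assms(2)] by (cases a) simp
    ultimately show ?thesis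
      using a by (simp add: inversions_def ract_wmult_emb)
  qed
  then have "ract (emb (inv u)) ` inversions N x \<subseteq> inversions N (wmult x (emb u))"
    by blast
  moreover have "inj (ract (emb (inv u)))"
    using permutes_inj[OF inv_u] by (rule inj_ract_emb)
  ultimately show ?thesis
    unfolding len_eq_card_inversions
    by (intro card_inj_on_le[OF inj_on_subset[OF _ subset_UNIV]]) (simp_all add: finite_inversions)
qed

lemma Wbar_g_block_preserving:
  assumes "ordpart N g" "u \<in> Wbar_g N g"
  shows "u permutes {1..N} \<and> (\<forall>p. block g (u p) = block g p)"
  using assms(2)
proof (induction rule: Wbar_g.induct)
  case gen_id
  then show ?case
    using permutes_id[of "{1..N}"] by (simp add: id_def)
next
  case (gen_step i u)
  then have "1 \<le> i" "i < N" "block g i = block g (Suc i)"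
    by (auto simp: mem_Pibar_g_iff sameblock_iff_block[OF assms(1)])
  then have "Transposition.transpose i (Suc i) permutes {1..N}"
      "block g (Transposition.transpose i (Suc i) p) = block g p" for p
    by (auto intro: permutes_swap_id simp: transpose_def)
  moreover have "Transposition.transpose i (Suc i) \<circ> u permutes {1..N}"
    using gen_step.IH calculation(1) by (blast intro: permutes_compose)
  ultimately show ?case
    using gen_step.IH by (simp add: comp_def)
qed

lemma transpose_in_Wbar_g:
  "1 \<le> p \<Longrightarrow> p < N \<Longrightarrow> sameblock g p (Suc p) \<Longrightarrow> Transposition.transpose p (Suc p) \<in> Wbar_g N g"
  using Wbar_g.gen_step[OF _ Wbar_g.gen_id, of p N g] by (simp add: mem_Pibar_g_iff)

lemma key_eq_iff: "inj w \<Longrightarrow> key (\<eta>, w) p = key (\<eta>, w) q \<longleftrightarrow> p = q"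
  by (auto simp: key_def inj_eq)

lemma Wsup_iff:
  assumes "ordpart N g"
  shows "x \<in> Wsup N g \<longleftrightarrow> x \<in> Wgrp N \<and> block_increasing N g (key x)"
proof (cases "x \<in> Wgrp N")
  case False
  then show ?thesis
    by (simp add: Wsup_def)
next
  case True
  then obtain \<eta> w where x: "x = (\<eta>, w)" and w: "w permutes {1..N}"
    by (auto simp: Wgrp_def Wbar_def)
  have neg_iff: "ract x (p, q, 0) \<in> Rminus N \<longleftrightarrow> \<not> key x p < key x q" if "sameblock g p q" "p \<noteq> q" for p q
    using that ract_root_in_Rminus_iff[OF w, of p q \<eta>] key_eq_iff[OF permutes_inj[OF w], of \<eta> p q]
    by (auto simp: x sameblock_iff_block[OF assms])
  show ?thesis
  proof
    assume sup: "x \<in> Wsup N g"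
    have "key x p < key x (Suc p)" if p: "1 \<le> p" "p < N" "sameblock g p (Suc p)" for p
    proof (rule ccontr)
      assume "\<not> key x p < key x (Suc p)"
      then have "len N (wmult x (emb (Transposition.transpose p (Suc p)))) < len N x"
        using p neg_iff by (intro len_wmult_transpose_less) auto
      then show False
        using sup transpose_in_Wbar_g[OF p] by (force simp: Wsup_def)
    qed
    then show "x \<in> Wgrp N \<and> block_increasing N g (key x)"
      using True by (simp add: block_increasing_def)
  next
    assume inc: "x \<in> Wgrp N \<and> block_increasing N g (key x)"
    have "ract x a \<notin> Rminus N" if "a \<in> Rbar_gplus N g" for a
      using that neg_iff block_increasingD[OF assms inc[THEN conjunct2]]
      by (auto simp: Rbar_gplus_def Rbar_g_def Rbar_def Rbarplus_def)
    then have "inversions N x \<inter> Rbar_gplus N g = {}"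
      by (auto simp: inversions_def)
    then show "x \<in> Wsup N g"
      using True len_le_len_wmult_block_preserving[OF assms] Wbar_g_block_preserving[OF assms]
      by (simp add: Wsup_def)
  qed
qed

lemma key_emb [simp]: "key (emb v) p = (0, v p)"
  by (simp add: key_def emb_def)

lemma wmult_emb_left: "wmult (emb u) (e, v) = (e \<circ> inv u, u \<circ> v)"
  by (simp add: wmult_def emb_def wact_def comp_def)

lemma Wbarsup_eq:
  assumes "ordpart N g"
  shows "Wbarsup N g = emb ` {u. u permutes {1..N} \<and> block_increasing N g u}"
proof -
  have "block_increasing N g (key (emb u)) \<longleftrightarrow> block_increasing N g u" for u
    by (simp add: block_increasing_def)
  moreover have "emb u \<in> Wgrp N \<longleftrightarrow> u permutes {1..N}" for u
    by (simp add: emb_def Wgrp_def Pbar_def Wbar_def)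
  ultimately show ?thesis
    by (auto simp: Wbarsup_def Wsup_iff[OF assms] Wbar_def)
qed

section \<open>Ranking permutations\<close>

definition rank :: "nat \<Rightarrow> (nat \<Rightarrow> 'a::linorder) \<Rightarrow> nat \<Rightarrow> nat" where
  "rank N K p = (if p \<in> {1..N} then Suc (card {q \<in> {1..N}. K q < K p}) else p)"

lemma rank_outside: "p \<notin> {1..N} \<Longrightarrow> rank N K p = p"
  unfolding rank_def by (rule if_not_P)

lemma rank_less:
  assumes "p \<in> {1..N}" "q \<in> {1..N}" "K p < K q"
  shows "rank N K p < rank N K q"
proof -
  have "{s \<in> {1..N}. K s < K p} \<subset> {s \<in> {1..N}. K s < K q}"
    using assms by auto
  then have "card {s \<in> {1..N}. K s < K p} < card {s \<in> {1..N}. K s < K q}"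
    by (intro psubset_card_mono) simp_all
  then show ?thesis
    using assms by (simp add: rank_def)
qed

lemma rank_less_iff:
  assumes "inj_on K {1..N}" "p \<in> {1..N}" "q \<in> {1..N}"
  shows "rank N K p < rank N K q \<longleftrightarrow> K p < K q"
proof
  assume less: "rank N K p < rank N K q"
  show "K p < K q"
  proof (rule ccontr)
    assume "\<not> K p < K q"
    then have "K q < K p \<or> p = q"
      using inj_on_eq_iff[OF assms] by (auto simp: not_less order.order_iff_strict)
    then show False
      using rank_less[OF assms(3,2), of K] less by auto
  qed
qed (rule rank_less[OF assms(2,3)])

lemma rank_permutes:
  assumes "inj_on K {1..N}"
  shows "rank N K permutes {1..N}"
proof -
  have inj: "inj_on (rank N K) {1..N}"
  proof (rule inj_onI)
    fix p q
    assume pq: "p \<in> {1..N}" "q \<in> {1..N}" "rank N K p = rank N K q"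
    then have "K p = K q"
      using rank_less_iff[OF assms pq(1,2)] rank_less_iff[OF assms pq(2,1)] by simp
    then show "p = q"
      using inj_on_eq_iff[OF assms pq(1,2)] by simp
  qed
  have "rank N K p \<in> {1..N}" if "p \<in> {1..N}" for p
  proof -
    have "card {q \<in> {1..N}. K q < K p} \<le> card ({1..N} - {p})"
      by (intro card_mono) auto
    then show ?thesis
      using that by (simp add: rank_def) linarith
  qed
  then have "rank N K ` {1..N} = {1..N}"
    using inj by (intro endo_inj_surj) auto
  then show ?thesis
    using inj by (intro bij_imp_permutes) (simp_all add: bij_betw_def rank_outside)
qed

lemma card_less_permutes:
  assumes "v permutes {1..N}" "p \<in> {1..N}"
  shows "card {q \<in> {1..N}. v q < v p} = v p - 1"
proof -
  have "inj_on v {q \<in> {1..N}. v q < v p}"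
    using permutes_inj[OF assms(1)] by (rule inj_on_subset) simp
  then have "card {q \<in> {1..N}. v q < v p} = card (v ` {q \<in> {1..N}. v q < v p})"
    by (simp add: card_image)
  also have "v ` {q \<in> {1..N}. v q < v p} = {m \<in> v ` {1..N}. m < v p}"
    by blast
  also have "\<dots> = {m \<in> {1..N}. m < v p}"
    by (simp only: permutes_image[OF assms(1)])
  also have "\<dots> = {1..<v p}"
    using permutes_in_image[OF assms(1), of p] assms(2) by auto
  finally show ?thesis
    by simp
qed

lemma permutes_eq_rank:
  assumes "v permutes {1..N}"
    and "\<And>p q. p \<in> {1..N} \<Longrightarrow> q \<in> {1..N} \<Longrightarrow> v p < v q \<Longrightarrow> K p < K q"
  shows "v = rank N K"
proof
  fix p
  show "v p = rank N K p"
  proof (cases "p \<in> {1..N}")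
    case False
    then show ?thesis
      using permutes_not_in[OF assms(1)] by (simp add: rank_outside)
  next
    case True
    have "K q < K p \<longleftrightarrow> v q < v p" if "q \<in> {1..N}" for q
    proof
      assume "K q < K p"
      moreover have "v p \<noteq> v q"
        using calculation permutes_inj[OF assms(1)] by (auto simp: inj_eq)
      ultimately show "v q < v p"
        using assms(2)[OF True that] by (meson less_asym' linorder_neqE)
    qed (rule assms(2)[OF that True])
    then have "{q \<in> {1..N}. K q < K p} = {q \<in> {1..N}. v q < v p}"
      by blast
    moreover have "1 \<le> v p"
      using permutes_in_image[OF assms(1)] True by auto
    ultimately show ?thesis
      using True card_less_permutes[OF assms(1) True] by (simp add: rank_def)
  qed
qed

lemma comp_permutes_cancel: "p permutes S \<Longrightarrow> f \<circ> p = g \<circ> p \<Longrightarrow> f = g"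
  by (metis comp_assoc comp_id permutes_inv_o(1))

lemma permutes_order_iff_Suc:
  fixes K :: "nat \<Rightarrow> 'a::order"
  assumes "v permutes {1..N}"
  shows "(\<forall>p\<in>{1..N}. \<forall>q\<in>{1..N}. v p < v q \<longrightarrow> K p < K q) \<longleftrightarrow>
    (\<forall>m. 1 \<le> m \<longrightarrow> m < N \<longrightarrow> K (inv v m) < K (inv v (Suc m)))"
proof -
  have inv_in: "inv v m \<in> {1..N} \<longleftrightarrow> m \<in> {1..N}" for m
    by (rule permutes_in_image[OF permutes_inv[OF assms]])
  have v_in: "v p \<in> {1..N} \<longleftrightarrow> p \<in> {1..N}" for p
    by (rule permutes_in_image[OF assms])
  show ?thesis
  proof safe
    fix m :: nat
    assume "\<forall>p\<in>{1..N}. \<forall>q\<in>{1..N}. v p < v q \<longrightarrow> K p < K q" "1 \<le> m" "m < N"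
    then show "K (inv v m) < K (inv v (Suc m))"
      using inv_in[of m] inv_in[of "Suc m"] by (simp add: permutes_inverses(1)[OF assms])
  next
    fix p q
    assume step: "\<forall>m. 1 \<le> m \<longrightarrow> m < N \<longrightarrow> K (inv v m) < K (inv v (Suc m))"
      and pq: "p \<in> {1..N}" "q \<in> {1..N}" "v p < v q"
    have "(K \<circ> inv v) (v p) < (K \<circ> inv v) (v q)"
    proof (rule lift_Suc_mono_less_ivl[of "{v p..<v q}"])
      show "(K \<circ> inv v) n < (K \<circ> inv v) (Suc n)" if "n \<in> {v p..<v q}" for n
        using that step v_in[of p] v_in[of q] pq by simp
    qed (use pq in simp_all)
    then show "K p < K q"
      by (simp add: permutes_inverses(2)[OF assms])
  qed
qed

definition pos_key :: "nat list \<Rightarrow> weight \<Rightarrow> nat \<Rightarrow> (int \<times> int) \<times> nat" where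
  "pos_key b \<mu> p = ((\<mu> p, - int (block b p)), p)"

lemma inj_emb: "inj emb"
  by (rule injI) (simp add: emb_def)

lemma Pminus_iff: "\<eta> \<in> Pminus N \<longleftrightarrow> \<eta> \<in> Pbar N \<and> (\<forall>m. 1 \<le> m \<longrightarrow> m < N \<longrightarrow> \<eta> m \<le> \<eta> (Suc m))"
proof
  assume "\<eta> \<in> Pminus N"
  moreover have "(m, Suc m, 0) \<in> Rbarplus N" if "1 \<le> m" "m < N" for m
    using that by (simp add: Rbarplus_def Rbar_def Rroots_def)
  ultimately show "\<eta> \<in> Pbar N \<and> (\<forall>m. 1 \<le> m \<longrightarrow> m < N \<longrightarrow> \<eta> m \<le> \<eta> (Suc m))"
    by (fastforce simp: Pminus_def)
next
  assume \<eta>: "\<eta> \<in> Pbar N \<and> (\<forall>m. 1 \<le> m \<longrightarrow> m < N \<longrightarrow> \<eta> m \<le> \<eta> (Suc m))"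
  have "\<eta> i \<le> \<eta> j" if "(i, j, k) \<in> Rbarplus N" for i j k
  proof -
    have ij: "1 \<le> i" "i < j" "j \<le> N"
      using that by (auto simp: Rbarplus_def Rbar_def Rroots_def)
    show ?thesis
      by (rule lift_Suc_mono_le_ivl[of "{i..<j}"]) (use \<eta> ij in auto)
  qed
  then show "\<eta> \<in> Pminus N"
    using \<eta> by (auto simp: Pminus_def)
qed

lemma mem_Xset_iff:
  assumes "ordpart N b"
  shows "(e, v) \<in> Xset N b \<longleftrightarrow>
    v permutes {1..N} \<and> block_increasing N b v \<and> (\<lambda>i. e i - eta_w N b v i) \<in> Pminus N"
proof -
  have "e \<in> Pminus_w N b v \<longleftrightarrow> (\<lambda>i. e i - eta_w N b v i) \<in> Pminus N"
    by (force simp: Pminus_w_def)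
  then show ?thesis
    by (auto simp: Xset_def Wbarsup_eq[OF assms] inj_image_mem_iff[OF inj_emb])
qed

lemma eta_w_outside: "i \<notin> {1..N} \<Longrightarrow> eta_w N b v i = 0"
  unfolding eta_w_def by (rule if_not_P)

lemma simple_root_in_ract_emb_image_iff:
  assumes "v permutes {1..N}"
  shows "(m, Suc m, 0) \<in> ract (emb v) ` (Rbarplus N - Rbar_gplus N b) \<longleftrightarrow>
    1 \<le> m \<and> m < N \<and> inv v m < inv v (Suc m) \<and> \<not> sameblock b (inv v m) (inv v (Suc m))"
    (is "?lhs \<longleftrightarrow> _")
proof -
  have "(m, Suc m, 0) = ract (emb v) a \<longleftrightarrow> a = (inv v m, inv v (Suc m), 0)" for a
    using permutes_inverses[OF assms] by (cases a) auto
  then have "?lhs \<longleftrightarrow> (inv v m, inv v (Suc m), 0) \<in> Rbarplus N - Rbar_gplus N b"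
    by (simp add: image_iff)
  moreover have "inv v n \<in> {1..N} \<longleftrightarrow> n \<in> {1..N}" for n
    by (rule permutes_in_image[OF permutes_inv[OF assms]])
  moreover have "(i, j, 0) \<in> Rbarplus N - Rbar_gplus N b \<longleftrightarrow>
      i \<in> {1..N} \<and> j \<in> {1..N} \<and> i < j \<and> \<not> sameblock b i j" for i j
    by (auto simp: Rbarplus_def Rbar_def Rroots_def Rbar_gplus_def Rbar_g_def)
  ultimately show ?thesis
    by (simp only:) auto
qed

lemma eta_w_Suc:
  assumes "v permutes {1..N}" "1 \<le> m" "m < N"
  shows "eta_w N b v (Suc m) = eta_w N b v m +
    (if inv v m < inv v (Suc m) \<and> \<not> sameblock b (inv v m) (inv v (Suc m)) then 1 else 0)"
proof -
  let ?D = "\<lambda>m. (m, Suc m, 0) \<in> ract (emb v) ` (Rbarplus N - Rbar_gplus N b)"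
  have "{n \<in> {1..<Suc m}. ?D n} = {n \<in> {1..<m}. ?D n} \<union> (if ?D m then {m} else {})"
    using assms(2) by (auto simp: less_Suc_eq)
  then have "card {n \<in> {1..<Suc m}. ?D n} = card {n \<in> {1..<m}. ?D n} + (if ?D m then 1 else 0)"
    by simp
  then show ?thesis
    using assms simple_root_in_ract_emb_image_iff[OF assms(1), of m b] by (simp add: eta_w_def)
qed

lemma pos_key_inv_less_Suc_iff:
  assumes b: "ordpart N b" and v: "v permutes {1..N}" "block_increasing N b v"
    and m: "1 \<le> m" "m < N"
  defines "P \<equiv> inv v m" and "Q \<equiv> inv v (Suc m)"
  shows "pos_key b (e \<circ> v) P < pos_key b (e \<circ> v) Q \<longleftrightarrow>
    e m + (if P < Q \<and> \<not> sameblock b P Q then 1 else 0) \<le> e (Suc m)"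
proof -
  have PQ: "P \<in> {1..N}" "Q \<in> {1..N}" "v P = m" "v Q = Suc m"
    using m permutes_in_image[OF permutes_inv[OF v(1)]] permutes_inverses(1)[OF v(1)]
    by (auto simp: P_def Q_def)
  have same: "sameblock b P Q \<longleftrightarrow> block b P = block b Q"
    using PQ by (simp add: sameblock_iff_block[OF b])
  have "P < Q" if "sameblock b P Q"
    using block_increasing_less_iff[OF b v(2) that] PQ by simp
  moreover have "block b P \<le> block b Q" if "P < Q"
    using that by (simp add: block_mono)
  moreover have "block b Q \<le> block b P" if "Q < P"
    using that by (simp add: block_mono)
  moreover have "P \<noteq> Q"
    using PQ by auto
  ultimately show ?thesis
    using PQ same by (auto simp: pos_key_def)
qed

lemma Xset_iff:
  assumes b: "ordpart N b"
  shows "(e, v) \<in> Xset N b \<longleftrightarrow> v permutes {1..N} \<and> block_increasing N b v \<and> e \<in> Pbar N \<and>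
    (\<forall>p\<in>{1..N}. \<forall>q\<in>{1..N}. v p < v q \<longrightarrow> pos_key b (e \<circ> v) p < pos_key b (e \<circ> v) q)"
proof (cases "v permutes {1..N} \<and> block_increasing N b v")
  case True
  let ?\<eta> = "\<lambda>i. e i - eta_w N b v i"
  have "?\<eta> \<in> Pbar N \<longleftrightarrow> e \<in> Pbar N"
    by (simp add: Pbar_def eta_w_outside)
  moreover have "?\<eta> m \<le> ?\<eta> (Suc m) \<longleftrightarrow>
      pos_key b (e \<circ> v) (inv v m) < pos_key b (e \<circ> v) (inv v (Suc m))" if "1 \<le> m" "m < N" for m
    using True that by (auto simp: eta_w_Suc pos_key_inv_less_Suc_iff[OF b])
  then have "(\<forall>m. 1 \<le> m \<longrightarrow> m < N \<longrightarrow> ?\<eta> m \<le> ?\<eta> (Suc m)) \<longleftrightarrow>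
      (\<forall>p\<in>{1..N}. \<forall>q\<in>{1..N}. v p < v q \<longrightarrow> pos_key b (e \<circ> v) p < pos_key b (e \<circ> v) q)"
    unfolding permutes_order_iff_Suc[OF True[THEN conjunct1]] by blast
  ultimately show ?thesis
    unfolding mem_Xset_iff[OF b] Pminus_iff using True by blast
next
  case False
  then show ?thesis
    by (auto simp: mem_Xset_iff[OF b])
qed

lemma sameblock_betaof_iff_pos_key:
  assumes b: "ordpart N b" and v: "v permutes {1..N}" "block_increasing N b v"
    and m: "1 \<le> m" "m < N"
  shows "sameblock (betaof N b (e, v)) m (Suc m) \<longleftrightarrow>
    fst (pos_key b (e \<circ> v) (inv v m)) = fst (pos_key b (e \<circ> v) (inv v (Suc m)))"
proof -
  let ?P = "inv v m" and ?Q = "inv v (Suc m)"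
  have PQ: "?P \<in> {1..N}" "?Q \<in> {1..N}" "v ?P = m" "v ?Q = Suc m"
    using m permutes_in_image[OF permutes_inv[OF v(1)]] permutes_inverses(1)[OF v(1)] by auto
  have "(m, Suc m, 0) = ract (e, v) a \<longleftrightarrow> a = (?P, ?Q, e m - e (Suc m))" for a
    using permutes_inverses[OF v(1)] by (cases a) (auto simp: ract_def)
  then have "sameblock (betaof N b (e, v)) m (Suc m) \<longleftrightarrow>
      (?P, ?Q, e m - e (Suc m)) \<in> Rbar_gplus N b"
    by (simp add: sameblock_betaof_iff[OF m] image_iff)
  also have "\<dots> \<longleftrightarrow> e m = e (Suc m) \<and> sameblock b ?P ?Q"
    using block_increasing_less_iff[OF b v(2), of ?P ?Q] PQ
    by (auto simp: Rbar_gplus_def Rbar_g_def Rbar_def Rbarplus_def Rroots_def)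
  also have "\<dots> \<longleftrightarrow> fst (pos_key b (e \<circ> v) ?P) = fst (pos_key b (e \<circ> v) ?Q)"
    using PQ by (auto simp: pos_key_def sameblock_iff_block[OF b])
  finally show ?thesis .
qed

lemma Xset_pos_key_less:
  assumes "ordpart N b" "(e, v) \<in> Xset N b" "p \<in> {1..N}" "q \<in> {1..N}" "v p < v q"
  shows "pos_key b (e \<circ> v) p < pos_key b (e \<circ> v) q"
  using assms unfolding Xset_iff[OF assms(1)] by blast

lemma Xset_pos_key_le:
  assumes "ordpart N b" "(e, v) \<in> Xset N b" "p \<in> {1..N}" "q \<in> {1..N}" "v p \<le> v q"
  shows "pos_key b (e \<circ> v) p \<le> pos_key b (e \<circ> v) q"
proof (cases "p = q")
  case False
  moreover have "inj v"
    using assms(2) unfolding Xset_iff[OF assms(1)] by (blast intro: permutes_inj)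
  ultimately show ?thesis
    using Xset_pos_key_less[OF assms(1-4)] assms(5) by (simp add: inj_eq le_less)
qed simp

lemma fst_mono_lex:
  fixes x y :: "'a::order \<times> 'b::order"
  shows "x \<le> y \<Longrightarrow> fst x \<le> fst y"
  by (auto simp: less_eq_prod_def)

lemma inj_on_pos_key: "inj_on (pos_key b \<mu>) A"
  by (auto simp: pos_key_def inj_on_def)

lemma rank_pos_key_less_iff:
  "p \<in> {1..N} \<Longrightarrow> q \<in> {1..N} \<Longrightarrow>
    rank N (pos_key b \<mu>) p < rank N (pos_key b \<mu>) q \<longleftrightarrow> pos_key b \<mu> p < pos_key b \<mu> q"
  by (rule rank_less_iff[OF inj_on_pos_key])

lemma Xset_eq_rank:
  assumes "ordpart N b" "(e, v) \<in> Xset N b"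
  shows "v = rank N (pos_key b (e \<circ> v))"
proof (rule permutes_eq_rank)
  show "v permutes {1..N}"
    using assms(2) unfolding Xset_iff[OF assms(1)] by blast
qed (rule Xset_pos_key_less[OF assms])

lemma sameblock_betaof_if_same_weight:
  assumes b: "ordpart N b" and x: "(e, v) \<in> Xset N b"
    and pq: "p < q" "sameblock b p q" "e (v p) = e (v q)"
  shows "sameblock (betaof N b (e, v)) (v p) (v q)"
proof -
  let ?K = "pos_key b (e \<circ> v)"
  have v: "v permutes {1..N}" "block_increasing N b v"
    using x by (simp_all add: Xset_iff[OF b])
  have range: "p \<in> {1..N}" "q \<in> {1..N}" "v p \<in> {1..N}" "v q \<in> {1..N}"
    using pq(2) permutes_in_image[OF v(1)] by (auto simp: sameblock_iff_block[OF b])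
  have fst_eq: "fst (?K p) = fst (?K q)"
    using pq(2,3) by (simp add: pos_key_def sameblock_iff_block[OF b])
  have adj: "sameblock (betaof N b (e, v)) m (Suc m)" if m: "v p \<le> m" "m < v q" for m
  proof -
    let ?P = "inv v m" and ?Q = "inv v (Suc m)"
    have "m \<in> {1..N}" "Suc m \<in> {1..N}"
      using m range by auto
    then have PQ: "?P \<in> {1..N}" "?Q \<in> {1..N}" "v ?P = m" "v ?Q = Suc m"
      using permutes_in_image[OF permutes_inv[OF v(1)]] permutes_inverses(1)[OF v(1)] by blast+
    \<comment> \<open>\<open>?P\<close> and \<open>?Q\<close> are squeezed between \<open>p\<close> and \<open>q\<close> in the \<open>pos_key\<close> order, so they share weight and block.\<close>
    have K: "?K p \<le> ?K ?P" "?K ?P \<le> ?K ?Q" "?K ?Q \<le> ?K q"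
      using Xset_pos_key_le[OF b x] range PQ m by simp_all
    have "fst (?K ?Q) \<le> fst (?K q)"
      using K(3) by (rule fst_mono_lex)
    also have "\<dots> = fst (?K p)"
      by (rule fst_eq[symmetric])
    also have "\<dots> \<le> fst (?K ?P)"
      using K(1) by (rule fst_mono_lex)
    finally have "fst (?K ?P) = fst (?K ?Q)"
      using fst_mono_lex[OF K(2)] by simp
    then show ?thesis
      using sameblock_betaof_iff_pos_key[OF b v] m range by simp
  qed
  have "v p < v q"
    using block_increasingD[OF b v(2) pq(1,2)] .
  show ?thesis
    by (rule sameblock_if_Suc[OF ordpart_betaof]) (use range adj \<open>v p < v q\<close> in auto)
qed

section \<open>The factorization of \<open>Wsup\<close>\<close>

lemma wmult_emb_Xset_in_Wsup:
  assumes b: "ordpart N b" and x: "(e, v) \<in> Xset N b"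
    and u: "u permutes {1..N}" "block_increasing N (betaof N b (e, v)) u"
  shows "wmult (emb u) (e, v) \<in> Wsup N b"
proof -
  have v: "v permutes {1..N}" "block_increasing N b v" and e: "e \<in> Pbar N"
    using x by (simp_all add: Xset_iff[OF b])
  have "e \<circ> inv u \<in> Pbar N"
    using e permutes_not_in[OF permutes_inv[OF u(1)]] by (simp add: Pbar_def)
  then have W: "wmult (emb u) (e, v) \<in> Wgrp N"
    using permutes_compose[OF v(1) u(1)] by (simp add: wmult_emb_left Wgrp_def Wbar_def)
  have key: "key (wmult (emb u) (e, v)) n = (e (v n), u (v n))" for n
    using permutes_inverses(2)[OF u(1)] by (simp add: wmult_emb_left key_def)
  have "key (wmult (emb u) (e, v)) p < key (wmult (emb u) (e, v)) (Suc p)"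
    if p: "1 \<le> p" "p < N" "sameblock b p (Suc p)" for p
  proof -
    have vp: "v p < v (Suc p)"
      using block_increasingD[OF b v(2) _ p(3)] by simp
    then have "pos_key b (e \<circ> v) p < pos_key b (e \<circ> v) (Suc p)"
      using p by (intro Xset_pos_key_less[OF b x]) auto
    then have "e (v p) \<le> e (v (Suc p))"
      by (auto simp: pos_key_def)
    moreover have "u (v p) < u (v (Suc p))" if "e (v p) = e (v (Suc p))"
      using sameblock_betaof_if_same_weight[OF b x _ p(3) that]
      by (intro block_increasingD[OF ordpart_betaof u(2) vp]) simp
    ultimately show ?thesis
      by (auto simp: key le_less)
  qed
  then show ?thesis
    using W by (simp add: Wsup_iff[OF b] block_increasing_def)
qed

lemma Xset_rank_pos_key:
  assumes b: "ordpart N b" and y: "(\<mu>, w) \<in> Wsup N b"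
    and v: "v = rank N (pos_key b (\<mu> \<circ> w))"
  shows "(\<mu> \<circ> (w \<circ> inv v), v) \<in> Xset N b"
proof -
  let ?K = "pos_key b (\<mu> \<circ> w)"
  have w: "w permutes {1..N}" and \<mu>: "\<mu> \<in> Pbar N" and inc: "block_increasing N b (key (\<mu>, w))"
    using y by (auto simp: Wsup_iff[OF b] Wgrp_def Wbar_def)
  have v_perm: "v permutes {1..N}"
    unfolding v by (rule rank_permutes[OF inj_on_pos_key])
  have "\<mu> \<circ> (w \<circ> inv v) \<in> Pbar N"
    using \<mu> permutes_not_in[OF permutes_compose[OF permutes_inv[OF v_perm] w]] by (simp add: Pbar_def)
  moreover have "\<mu> \<circ> (w \<circ> inv v) \<circ> v = \<mu> \<circ> w"
    by (simp add: fun_eq_iff permutes_inverses(2)[OF v_perm])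
  moreover have "?K p < ?K (Suc p)" if "1 \<le> p" "p < N" "sameblock b p (Suc p)" for p
    using inc that by (auto simp: block_increasing_def key_def pos_key_def sameblock_iff_block[OF b])
  then have "block_increasing N b v"
    by (simp add: block_increasing_def v rank_pos_key_less_iff)
  ultimately show ?thesis
    using v_perm by (simp add: Xset_iff[OF b] v rank_pos_key_less_iff)
qed

lemma block_increasing_betaof_rank_pos_key:
  assumes b: "ordpart N b" and y: "(\<mu>, w) \<in> Wsup N b"
    and v: "v = rank N (pos_key b (\<mu> \<circ> w))"
  shows "block_increasing N (betaof N b (\<mu> \<circ> (w \<circ> inv v), v)) (w \<circ> inv v)"
  unfolding block_increasing_def
proof (intro allI impI)
  fix m
  assume m: "1 \<le> m" "m < N" "sameblock (betaof N b (\<mu> \<circ> (w \<circ> inv v), v)) m (Suc m)"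
  let ?K = "pos_key b (\<mu> \<circ> w)" and ?P = "inv v m" and ?Q = "inv v (Suc m)"
  have inc: "block_increasing N b (key (\<mu>, w))"
    using y by (simp add: Wsup_iff[OF b])
  have "v permutes {1..N}" "block_increasing N b v"
    using Xset_rank_pos_key[OF assms] by (simp_all add: Xset_iff[OF b])
  note v_perm = this(1) and sameblock_iff = sameblock_betaof_iff_pos_key[OF b this]
  have "m \<in> {1..N}" "Suc m \<in> {1..N}"
    using m by auto
  then have PQ: "?P \<in> {1..N}" "?Q \<in> {1..N}" "v ?P = m" "v ?Q = Suc m"
    using permutes_in_image[OF permutes_inv[OF v_perm]] permutes_inverses(1)[OF v_perm] by blast+
  have "\<mu> \<circ> (w \<circ> inv v) \<circ> v = \<mu> \<circ> w"
    by (simp add: fun_eq_iff permutes_inverses(2)[OF v_perm])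
  then have fst_eq: "fst (?K ?P) = fst (?K ?Q)"
    using sameblock_iff[OF m(1,2)] m(3) by simp
  moreover have "?K ?P < ?K ?Q"
    using rank_pos_key_less_iff[OF PQ(1,2), of b "\<mu> \<circ> w", folded v] PQ(3,4) by simp
  ultimately have "?P < ?Q"
    by (simp add: less_prod_def' pos_key_def)
  moreover have "sameblock b ?P ?Q"
    using fst_eq PQ by (simp add: pos_key_def sameblock_iff_block[OF b])
  ultimately have "key (\<mu>, w) ?P < key (\<mu>, w) ?Q"
    by (rule block_increasingD[OF b inc])
  moreover have "\<mu> (w ?P) = \<mu> (w ?Q)"
    using fst_eq by (simp add: pos_key_def)
  ultimately show "(w \<circ> inv v) m < (w \<circ> inv v) (Suc m)"
    by (simp add: key_def)
qed

lemma Wsup_factor: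
  assumes b: "ordpart N b" and y: "y \<in> Wsup N b"
  obtains e v u where "(e, v) \<in> Xset N b" "u permutes {1..N}"
    "block_increasing N (betaof N b (e, v)) u" "wmult (emb u) (e, v) = y"
proof -
  obtain \<mu> w where y_eq: "y = (\<mu>, w)"
    by fastforce
  define v where "v = rank N (pos_key b (\<mu> \<circ> w))"
  have "w permutes {1..N}"
    using y by (simp add: y_eq Wsup_iff[OF b] Wgrp_def Wbar_def)
  moreover have "v permutes {1..N}"
    unfolding v_def by (rule rank_permutes[OF inj_on_pos_key])
  ultimately have u: "w \<circ> inv v permutes {1..N}"
    by (blast intro: permutes_compose permutes_inv)
  have "wmult (emb (w \<circ> inv v)) (\<mu> \<circ> (w \<circ> inv v), v) = y"
    using permutes_inv_o(1)[OF u] permutes_inv_o(2)[OF \<open>v permutes {1..N}\<close>]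
    by (simp add: wmult_emb_left y_eq comp_assoc)
  then show thesis
    using that u y Xset_rank_pos_key[OF b _ v_def] block_increasing_betaof_rank_pos_key[OF b _ v_def]
    by (simp add: y_eq)
qed

lemma wmult_emb_Xset_inj:
  assumes b: "ordpart N b" and x1: "(e1, v1) \<in> Xset N b" and x2: "(e2, v2) \<in> Xset N b"
    and u1: "u1 permutes {1..N}" and u2: "u2 permutes {1..N}"
    and eq: "wmult (emb u1) (e1, v1) = wmult (emb u2) (e2, v2)"
  shows "e1 = e2 \<and> v1 = v2 \<and> u1 = u2"
proof -
  have e_eq: "e1 \<circ> inv u1 = e2 \<circ> inv u2" and w_eq: "u1 \<circ> v1 = u2 \<circ> v2"
    using eq by (simp_all add: wmult_emb_left)
  have "e1 \<circ> v1 = (e1 \<circ> inv u1) \<circ> (u1 \<circ> v1)"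
    by (simp add: fun_eq_iff permutes_inverses(2)[OF u1])
  also have "\<dots> = (e2 \<circ> inv u2) \<circ> (u2 \<circ> v2)"
    using e_eq w_eq by simp
  also have "\<dots> = e2 \<circ> v2"
    by (simp add: fun_eq_iff permutes_inverses(2)[OF u2])
  finally have "e1 \<circ> v1 = e2 \<circ> v2" .
  then have v: "v1 = v2"
    using Xset_eq_rank[OF b x1] Xset_eq_rank[OF b x2] by simp
  have v1: "v1 permutes {1..N}"
    using x1 unfolding Xset_iff[OF b] by blast
  have u: "u1 = u2"
    by (rule comp_permutes_cancel[OF v1]) (use w_eq v in simp)
  have "e1 = e2"
    by (rule comp_permutes_cancel[OF permutes_inv[OF u1]]) (use e_eq u in simp)
  with u v show ?thesis
    by simp
qed

theorem corollary2p18: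
  fixes N :: nat and b :: "nat list"
  assumes "N \<ge> 2" and "ordpart N b"
  shows "(\<forall>x \<in> Xset N b. (\<lambda>w. wmult w x) ` Wbarsup N (betaof N b x) \<subseteq> Wsup N b)
    \<and> bij_betw (\<lambda>(x, w). wmult w x) (SIGMA x : Xset N b. Wbarsup N (betaof N b x)) (Wsup N b)"
proof -
  have b: "ordpart N b"
    by (fact assms(2))
  note Wbarsup_betaof = Wbarsup_eq[OF ordpart_betaof]
  have sub: "\<forall>x \<in> Xset N b. (\<lambda>w. wmult w x) ` Wbarsup N (betaof N b x) \<subseteq> Wsup N b"
    using wmult_emb_Xset_in_Wsup[OF b] by (auto simp: Wbarsup_betaof)
  have "inj_on (\<lambda>(x, w). wmult w x) (SIGMA x : Xset N b. Wbarsup N (betaof N b x))"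
    by (auto simp: inj_on_def Wbarsup_betaof dest: wmult_emb_Xset_inj[OF b])
  moreover have "Wsup N b \<subseteq> (\<lambda>(x, w). wmult w x) ` (SIGMA x : Xset N b. Wbarsup N (betaof N b x))"
  proof
    fix y
    assume "y \<in> Wsup N b"
    then obtain e v u where "(e, v) \<in> Xset N b" "u permutes {1..N}"
      "block_increasing N (betaof N b (e, v)) u" "wmult (emb u) (e, v) = y"
      by (rule Wsup_factor[OF b])
    then show "y \<in> (\<lambda>(x, w). wmult w x) ` (SIGMA x : Xset N b. Wbarsup N (betaof N b x))"
      by (force simp: Wbarsup_betaof)
  qed
  ultimately show ?thesis
    using sub by (fastforce simp: bij_betw_def)
qed

end
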